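(* Let $n\ge1$ and $c:E_n\to\mathbb{C}$ an admissible edge weighting of $Q_n$. Then there is a unique unital $\ast$-homomorphism $\rho_c: C^\ast(Q_n)\to M_{U_n(c)} = B(\mathbb{C}^{U_n(c)})$ with $\rho_c(p_i) = E_{ii}$ for $i\in U_n(c)$, $\rho_c(p_j) = \big[c(i_1j)\overline{c(i_2j)}\big]_{i_1,i_2\in U_n(c)}$ for $j\in V_n(c)$, and $\rho_c(p_x)=0$ for $x\notin U_n(c)\cup V_n(c)$ (where $c(ij):=0$ if $i,j$ are not adjacent). Moreover, for every $j\in V_n(c)$, $\rho_c(p_j)$ is the projection onto the span of the vector $\psi_j = (c(ij))_{i\in U_n(c)}\in\mathbb{C}^{U_n(c)}$.
   Context: For $n\ge1$, identify integers $0\le i<2^n$ with their $n$-digit binary representations; $i\#k$ is $i$ with its $k$-th digit flipped. The hypercube $Q_n$ has vertex classes $U_n$ (even number of $1$'s) and $V_n$ (odd number of $1$'s), edge set $E_n$ of pairs $ij$ ($i\in U_n$, $j\in V_n$, $j=i\#k$ for some $k<n$); $\mathcal N(x)$ denotes the neighbors of $x$. $C^\ast(Q_n)$ is the universal unital C*-algebra generated by projections $p_x$ ($x\in U_n\cup V_n$) with $\sum_{u\in U_n}p_u=1=\sum_{v\in V_n}p_v$ and $p_up_v=0$ when $u,v$ are non-adjacent. For $c:E_n\to\mathbb{C}$, $Q_n(c) = (U_n(c),V_n(c),E_n(c))$ is the subgraph consisting of the edges with $c(ij)\ne0$ and their endpoints. $c$ is admissible if $\sum_{i\in\mathcal N(j_1)\cap\mathcal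 N(j_2)}c(ij_1)\overline{c(ij_2)}=\delta_{j_1j_2}$ for all $j_1,j_2\in V_n(c)$ and $\sum_{j\in\mathcal N(i_1)\cap\mathcal N(i_2)}c(i_1j)\overline{c(i_2j)}=\delta_{i_1i_2}$ for all $i_1,i_2\in U_n(c)$. $E_{ii}$ are the standard matrix units. *)

theory Defs
  imports Complex_Main
begin

definition ones :: "nat \<Rightarrow> nat \<Rightarrow> nat" where
  "ones n i = card {k. k < n \<and> bit i k}"

definition Uv :: "nat \<Rightarrow> nat set" where
  "Uv n = {i. i < 2 ^ n \<and> even (ones n i)}"

definition Vv :: "nat \<Rightarrow> nat set" where
  "Vv n = {i. i < 2 ^ n \<and> odd (ones n i)}"

definition flipd :: "nat \<Rightarrow> nat \<Rightarrow> nat" where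
  "flipd i k = flip_bit k i"

definition edge :: "nat \<Rightarrow> nat \<Rightarrow> nat \<Rightarrow> bool" where
  "edge n i j \<longleftrightarrow> i \<in> Uv n \<and> j \<in> Vv n \<and> (\<exists>k<n. j = flipd i k)"

definition En :: "nat \<Rightarrow> (nat \<times> nat) set" where
  "En n = {(i, j). edge n i j}"

definition nbrs :: "nat \<Rightarrow> nat \<Rightarrow> nat set" where
  "nbrs n x = {y. edge n x y \<or> edge n y x}"

text \<open>An edge weighting c : E_n -> C is modelled as a function of (i,j); only values on
  edges matter, and cw extends it by 0 to non-adjacent pairs.\<close>
definition cw :: "nat \<Rightarrow> (nat \<Rightarrow> nat \<Rightarrow> complex) \<Rightarrow> nat \<Rightarrow> nat \<Rightarrow> complex" where
  "cw n c i j = (if edge n i j then c i j else 0)"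

definition Uc :: "nat \<Rightarrow> (nat \<Rightarrow> nat \<Rightarrow> complex) \<Rightarrow> nat set" where
  "Uc n c = {i. \<exists>j. edge n i j \<and> c i j \<noteq> 0}"

definition Vc :: "nat \<Rightarrow> (nat \<Rightarrow> nat \<Rightarrow> complex) \<Rightarrow> nat set" where
  "Vc n c = {j. \<exists>i. edge n i j \<and> c i j \<noteq> 0}"

definition admissible :: "nat \<Rightarrow> (nat \<Rightarrow> nat \<Rightarrow> complex) \<Rightarrow> bool" where
  "admissible n c \<longleftrightarrow>
     (\<forall>j1\<in>Vc n c. \<forall>j2\<in>Vc n c.
        (\<Sum>i\<in>nbrs n j1 \<inter> nbrs n j2. c i j1 * cnj (c i j2)) = (if j1 = j2 then 1 else 0)) \<and>
     (\<forall>i1\<in>Uc n c. \<forall>i2\<in>Uc n c.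
        (\<Sum>j\<in>nbrs n i1 \<inter> nbrs n i2. c i1 j * cnj (c i2 j)) = (if i1 = i2 then 1 else 0))"

text \<open>A matrix in M_I is a function nat => nat => complex vanishing outside I x I;
  a vector in C^I is a function nat => complex vanishing outside I.\<close>
definition mmult :: "nat set \<Rightarrow> (nat \<Rightarrow> nat \<Rightarrow> complex) \<Rightarrow> (nat \<Rightarrow> nat \<Rightarrow> complex) \<Rightarrow> nat \<Rightarrow> nat \<Rightarrow> complex" where
  "mmult I A B = (\<lambda>a b. \<Sum>k\<in>I. A a k * B k b)"

definition madj :: "(nat \<Rightarrow> nat \<Rightarrow> complex) \<Rightarrow> nat \<Rightarrow> nat \<Rightarrow> complex" where
  "madj A = (\<lambda>a b. cnj (A b a))"

definition mid :: "nat set \<Rightarrow> nat \<Rightarrow> nat \<Rightarrow> complex" where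
  "mid I = (\<lambda>a b. if a \<in> I \<and> a = b then 1 else 0)"

definition mvec :: "nat set \<Rightarrow> (nat \<Rightarrow> nat \<Rightarrow> complex) \<Rightarrow> (nat \<Rightarrow> complex) \<Rightarrow> nat \<Rightarrow> complex" where
  "mvec I A w = (\<lambda>a. \<Sum>b\<in>I. A a b * w b)"

definition is_proj :: "nat set \<Rightarrow> (nat \<Rightarrow> nat \<Rightarrow> complex) \<Rightarrow> bool" where
  "is_proj I P \<longleftrightarrow> mmult I P P = P \<and> madj P = P"

text \<open>Universal property of C*(Q_n): a family (P_x) in M_I defines a (necessarily unique,
  since the p_x generate C*(Q_n)) unital *-homomorphism rho : C*(Q_n) -> M_I with
  rho(p_x) = P_x iff the P_x satisfy the defining relations of C*(Q_n) in M_I.\<close>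
definition Qn_relations :: "nat \<Rightarrow> nat set \<Rightarrow> (nat \<Rightarrow> nat \<Rightarrow> nat \<Rightarrow> complex) \<Rightarrow> bool" where
  "Qn_relations n I P \<longleftrightarrow>
     (\<forall>x\<in>Uv n \<union> Vv n. is_proj I (P x)) \<and>
     (\<lambda>a b. \<Sum>u\<in>Uv n. P u a b) = mid I \<and>
     (\<lambda>a b. \<Sum>v\<in>Vv n. P v a b) = mid I \<and>
     (\<forall>u\<in>Uv n. \<forall>v\<in>Vv n. \<not> edge n u v \<longrightarrow> mmult I (P u) (P v) = (\<lambda>a b. 0))"

definition extends_to_unital_star_hom :: "nat \<Rightarrow> nat set \<Rightarrow> (nat \<Rightarrow> nat \<Rightarrow> nat \<Rightarrow> complex) \<Rightarrow> bool" where
  "extends_to_unital_star_hom n I P \<longleftrightarrow> finite I \<and>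
     (\<forall>x a b. (a \<notin> I \<or> b \<notin> I) \<longrightarrow> P x a b = 0) \<and> Qn_relations n I P"

definition rho :: "nat \<Rightarrow> (nat \<Rightarrow> nat \<Rightarrow> complex) \<Rightarrow> nat \<Rightarrow> nat \<Rightarrow> nat \<Rightarrow> complex" where
  "rho n c x = (if x \<in> Uc n c then (\<lambda>a b. if a = x \<and> b = x then 1 else 0)
     else if x \<in> Vc n c then
       (\<lambda>a b. if a \<in> Uc n c \<and> b \<in> Uc n c then cw n c a x * cnj (cw n c b x) else 0)
     else (\<lambda>a b. 0))"

definition psi :: "nat \<Rightarrow> (nat \<Rightarrow> nat \<Rightarrow> complex) \<Rightarrow> nat \<Rightarrow> nat \<Rightarrow> complex" where
  "psi n c j = (\<lambda>a. if a \<in> Uc n c then cw n c a j else 0)"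

end

theory Submission
  imports Defs
begin

text \<open>The \<open>\<rho>\<^sub>c(p\<^sub>u)\<close> are the diagonal units of the matrix algebra over \<open>Uc n c\<close>, so they are
  projections summing to the identity. Each \<open>\<rho>\<^sub>c(p\<^sub>j)\<close> is the rank-one operator
  \<open>\<psi>\<^sub>j \<psi>\<^sub>j\<^sup>*\<close>, a projection onto \<open>\<psi>\<^sub>j\<close> because the column condition of
  admissibility makes \<open>\<psi>\<^sub>j\<close> a unit vector; the row condition says exactly that
  \<open>\<Sum>\<^sub>j \<psi>\<^sub>j \<psi>\<^sub>j\<^sup>* = 1\<close>. Finally \<open>E\<^sub>u\<^sub>u \<rho>\<^sub>c(p\<^sub>v) = 0\<close> for non-adjacent \<open>u, v\<close>,
  since \<open>\<psi>\<^sub>v\<close> vanishes at \<open>u\<close>.\<close>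

definition rank_one :: "nat set \<Rightarrow> (nat \<Rightarrow> complex) \<Rightarrow> nat \<Rightarrow> nat \<Rightarrow> complex" where
  "rank_one I f = (\<lambda>a b. if a \<in> I \<and> b \<in> I then f a * cnj (f b) else 0)"

definition unit_diag :: "nat \<Rightarrow> nat \<Rightarrow> nat \<Rightarrow> complex" where
  "unit_diag x = (\<lambda>a b. if a = x \<and> b = x then 1 else 0)"

lemma is_proj_rank_one:
  assumes "(\<Sum>k\<in>I. f k * cnj (f k)) = 1"
  shows "is_proj I (rank_one I f)"
proof -
  have "mmult I (rank_one I f) (rank_one I f) a b = rank_one I f a b" for a b
  proof (cases "a \<in> I \<and> b \<in> I")
    case True
    have "mmult I (rank_one I f) (rank_one I f) a b = (\<Sum>k\<in>I. (f a * cnj (f b)) * (f k * cnj (f k)))"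
      unfolding mmult_def rank_one_def using True by (auto simp: algebra_simps intro!: sum.cong)
    also have "\<dots> = f a * cnj (f b)"
      using assms by (simp add: sum_distrib_left[symmetric])
    finally show ?thesis using True by (simp add: rank_one_def)
  qed (auto simp: mmult_def rank_one_def)
  then show ?thesis by (auto simp: is_proj_def madj_def rank_one_def fun_eq_iff)
qed

lemma mvec_rank_one:
  "mvec I (rank_one I f) w = (\<lambda>a. (\<Sum>b\<in>I. cnj (f b) * w b) * (if a \<in> I then f a else 0))"
proof
  fix a
  have "(\<Sum>b\<in>I. f a * cnj (f b) * w b) = (\<Sum>b\<in>I. cnj (f b) * w b) * f a"
    by (subst sum_distrib_right) (simp add: mult_ac)
  then show "mvec I (rank_one I f) w a = (\<Sum>b\<in>I. cnj (f b) * w b) * (if a \<in> I then f a else 0)"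
    by (auto simp: mvec_def rank_one_def intro: sum.cong)
qed

lemma range_rank_one:
  assumes "(\<Sum>k\<in>I. f k * cnj (f k)) = 1"
  shows "{mvec I (rank_one I f) w | w. \<forall>a. a \<notin> I \<longrightarrow> w a = 0}
     = {(\<lambda>a. s * (if a \<in> I then f a else 0)) | s. True}"
proof (intro set_eqI iffI)
  fix x assume "x \<in> {mvec I (rank_one I f) w | w. \<forall>a. a \<notin> I \<longrightarrow> w a = 0}"
  then show "x \<in> {(\<lambda>a. s * (if a \<in> I then f a else 0)) | s. True}"
    by (auto simp: mvec_rank_one)
next
  fix x assume "x \<in> {(\<lambda>a. s * (if a \<in> I then f a else 0)) | s. True}"
  then obtain s where x: "x = (\<lambda>a. s * (if a \<in> I then f a else 0))" by blast
  have "(\<Sum>b\<in>I. cnj (f b) * x b) = s * (\<Sum>b\<in>I. f b * cnj (f b))"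
    unfolding x sum_distrib_left by (auto simp: algebra_simps intro!: sum.cong)
  then have "x = mvec I (rank_one I f) x"
    using assms by (simp add: mvec_rank_one x)
  moreover have "\<forall>a. a \<notin> I \<longrightarrow> x a = 0" by (simp add: x)
  ultimately show "x \<in> {mvec I (rank_one I f) w | w. \<forall>a. a \<notin> I \<longrightarrow> w a = 0}"
    by blast
qed

lemma is_proj_unit_diag:
  assumes "finite I" and "x \<in> I"
  shows "is_proj I (unit_diag x)"
proof -
  have "mmult I (unit_diag x) (unit_diag x) a b = (\<Sum>k\<in>I. if k = x then unit_diag x a b else 0)" for a b
    unfolding mmult_def unit_diag_def by (rule sum.cong) auto
  then show ?thesis
    using assms by (simp add: is_proj_def madj_def unit_diag_def fun_eq_iff)
qed

lemma is_proj_zero: "is_proj I (\<lambda>a b. 0)"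
  by (simp add: is_proj_def mmult_def madj_def fun_eq_iff)

lemma Uv_Vv_disjoint: "Uv n \<inter> Vv n = {}"
  by (auto simp: Uv_def Vv_def)

lemma finite_Uv: "finite (Uv n)"
  by (rule finite_subset[of _ "{..<2^n}"]) (auto simp: Uv_def)

lemma finite_Vv: "finite (Vv n)"
  by (rule finite_subset[of _ "{..<2^n}"]) (auto simp: Vv_def)

lemma Uc_subset_Uv: "Uc n c \<subseteq> Uv n"
  by (auto simp: Uc_def edge_def)

lemma Vc_subset_Vv: "Vc n c \<subseteq> Vv n"
  by (auto simp: Vc_def edge_def)

lemma finite_Uc: "finite (Uc n c)"
  using finite_subset[OF Uc_subset_Uv finite_Uv] .

lemma cw_nonzero_imp: "cw n c a v \<noteq> 0 \<Longrightarrow> a \<in> Uc n c \<and> v \<in> Vc n c"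
  by (auto simp: cw_def Uc_def Vc_def split: if_splits)

lemma nbrs_Uv: "i \<in> Uv n \<Longrightarrow> nbrs n i = {j. edge n i j}"
  using Uv_Vv_disjoint by (auto simp: nbrs_def edge_def)

lemma nbrs_Vv: "j \<in> Vv n \<Longrightarrow> nbrs n j = {i. edge n i j}"
  using Uv_Vv_disjoint by (auto simp: nbrs_def edge_def)

lemma admissible_column_norm:
  assumes "admissible n c" and j: "j \<in> Vc n c"
  shows "(\<Sum>i\<in>Uc n c. cw n c i j * cnj (cw n c i j)) = 1"
proof -
  have "(\<Sum>i\<in>nbrs n j \<inter> nbrs n j. c i j * cnj (c i j)) = 1"
    using assms unfolding admissible_def by (metis (full_types))
  moreover have "nbrs n j = {i. edge n i j}"
    using j Vc_subset_Vv nbrs_Vv by blast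
  ultimately have "(\<Sum>i\<in>{i. edge n i j}. c i j * cnj (c i j)) = 1" by simp
  also have "(\<Sum>i\<in>{i. edge n i j}. c i j * cnj (c i j)) = (\<Sum>i\<in>Uv n. cw n c i j * cnj (cw n c i j))"
    by (rule sum.mono_neutral_cong_left[OF finite_Uv]) (auto simp: cw_def edge_def)
  also have "\<dots> = (\<Sum>i\<in>Uc n c. cw n c i j * cnj (cw n c i j))"
    by (rule sum.mono_neutral_right[OF finite_Uv Uc_subset_Uv]) (use cw_nonzero_imp in fastforce)
  finally show ?thesis by simp
qed

lemma admissible_rows_orthonormal:
  assumes "admissible n c" and a: "a \<in> Uc n c" and b: "b \<in> Uc n c"
  shows "(\<Sum>v\<in>Vv n. cw n c a v * cnj (cw n c b v)) = (if a = b then 1 else 0)"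
proof -
  have "a \<in> Uv n" "b \<in> Uv n" using a b Uc_subset_Uv by blast+
  then have "nbrs n a \<inter> nbrs n b = {v. edge n a v \<and> edge n b v}"
    by (auto simp: nbrs_Uv)
  moreover have "(\<Sum>v\<in>nbrs n a \<inter> nbrs n b. c a v * cnj (c b v)) = (if a = b then 1 else 0)"
    using assms unfolding admissible_def by blast
  ultimately have "(\<Sum>v\<in>{v. edge n a v \<and> edge n b v}. c a v * cnj (c b v)) = (if a = b then 1 else 0)"
    by simp
  moreover have "(\<Sum>v\<in>{v. edge n a v \<and> edge n b v}. c a v * cnj (c b v))
      = (\<Sum>v\<in>Vv n. cw n c a v * cnj (cw n c b v))"
    by (rule sum.mono_neutral_cong_left[OF finite_Vv]) (auto simp: cw_def edge_def)
  ultimately show ?thesis by simp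
qed

lemma rho_Uv:
  assumes "u \<in> Uv n"
  shows "rho n c u = (if u \<in> Uc n c then unit_diag u else (\<lambda>a b. 0))"
proof -
  have "u \<notin> Vc n c" using assms Uv_Vv_disjoint Vc_subset_Vv by blast
  then show ?thesis by (simp add: rho_def unit_diag_def)
qed

text \<open>Off \<open>Vc n c\<close> the weights \<open>cw n c _ v\<close> vanish, so this also covers \<open>\<rho>\<^sub>c(p\<^sub>v) = 0\<close>.\<close>
lemma rho_Vv:
  assumes "v \<in> Vv n"
  shows "rho n c v = rank_one (Uc n c) (\<lambda>a. cw n c a v)"
proof -
  have "v \<notin> Uc n c" using assms Uv_Vv_disjoint Uc_subset_Uv by blast
  moreover have "v \<notin> Vc n c \<Longrightarrow> cw n c a v = 0" for a using cw_nonzero_imp by blast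
  ultimately show ?thesis by (auto simp: rho_def rank_one_def fun_eq_iff)
qed

lemma is_proj_rho:
  assumes "admissible n c" and "x \<in> Uv n \<union> Vv n"
  shows "is_proj (Uc n c) (rho n c x)"
proof (cases "x \<in> Vc n c")
  case True
  then have "rho n c x = rank_one (Uc n c) (\<lambda>a. cw n c a x)"
    using Vc_subset_Vv rho_Vv by blast
  then show ?thesis
    using is_proj_rank_one admissible_column_norm[OF assms(1) True] by simp
next
  case False
  then have "rho n c x = (if x \<in> Uc n c then unit_diag x else (\<lambda>a b. 0))"
    by (simp add: rho_def unit_diag_def)
  then show ?thesis
    by (simp add: is_proj_zero is_proj_unit_diag finite_Uc)
qed

lemma range_rho_Vc:
  assumes "admissible n c" and "j \<in> Vc n c"
  shows "{mvec (Uc n c) (rho n c j) w | w. \<forall>a. a \<notin> Uc n c \<longrightarrow> w a = 0}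
           = {(\<lambda>a. s * psi n c j a) | s. True}"
proof -
  have "rho n c j = rank_one (Uc n c) (\<lambda>a. cw n c a j)"
    using assms(2) Vc_subset_Vv rho_Vv by blast
  then show ?thesis
    using range_rank_one[OF admissible_column_norm[OF assms]] by (simp add: psi_def)
qed

lemma sum_rho_Uv: "(\<lambda>a b. \<Sum>u\<in>Uv n. rho n c u a b) = mid (Uc n c)"
proof (intro ext)
  fix a b
  have "(\<Sum>u\<in>Uv n. rho n c u a b) = (\<Sum>u\<in>Uv n. if u = a then mid (Uc n c) a b else 0)"
    by (rule sum.cong) (auto simp: rho_Uv unit_diag_def mid_def)
  also have "\<dots> = mid (Uc n c) a b"
    using Uc_subset_Uv by (auto simp: sum.delta[OF finite_Uv] mid_def)
  finally show "(\<Sum>u\<in>Uv n. rho n c u a b) = mid (Uc n c) a b" .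
qed

lemma sum_rho_Vv:
  assumes "admissible n c"
  shows "(\<lambda>a b. \<Sum>v\<in>Vv n. rho n c v a b) = mid (Uc n c)"
proof (intro ext)
  fix a b
  have "(\<Sum>v\<in>Vv n. rho n c v a b)
      = (\<Sum>v\<in>Vv n. if a \<in> Uc n c \<and> b \<in> Uc n c then cw n c a v * cnj (cw n c b v) else 0)"
    by (rule sum.cong) (simp_all add: rho_Vv rank_one_def)
  also have "\<dots> = mid (Uc n c) a b"
    using admissible_rows_orthonormal[OF assms, of a b]
    by (cases "a \<in> Uc n c \<and> b \<in> Uc n c") (auto simp: mid_def)
  finally show "(\<Sum>v\<in>Vv n. rho n c v a b) = mid (Uc n c) a b" .
qed

lemma rho_orthogonal_nonadjacent:
  assumes "u \<in> Uv n" and "v \<in> Vv n" and "\<not> edge n u v"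
  shows "mmult (Uc n c) (rho n c u) (rho n c v) = (\<lambda>a b. 0)"
proof (cases "u \<in> Uc n c")
  case True
  have "cw n c u v = 0" using assms(3) by (simp add: cw_def)
  then have "(\<Sum>k\<in>Uc n c. unit_diag u a k * rank_one (Uc n c) (\<lambda>i. cw n c i v) k b) = 0" for a b
    by (intro sum.neutral) (simp add: unit_diag_def rank_one_def)
  then show ?thesis
    unfolding mmult_def rho_Uv[OF assms(1)] rho_Vv[OF assms(2)] using True by simp
next
  case False
  then show ?thesis
    unfolding mmult_def rho_Uv[OF assms(1)] by simp
qed

lemma rho_support: "a \<notin> Uc n c \<or> b \<notin> Uc n c \<Longrightarrow> rho n c x a b = 0"
  unfolding rho_def by (cases "x \<in> Uc n c") auto

theorem proposition4p4:
  fixes n :: nat and c :: "nat \<Rightarrow> nat \<Rightarrow> complex"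
  assumes "n \<ge> 1" and "admissible n c"
  shows "extends_to_unital_star_hom n (Uc n c) (rho n c) \<and>
         (\<forall>j\<in>Vc n c. is_proj (Uc n c) (rho n c j) \<and>
            {mvec (Uc n c) (rho n c j) w | w. \<forall>a. a \<notin> Uc n c \<longrightarrow> w a = 0}
              = {(\<lambda>a. s * psi n c j a) | s. True})"
proof -
  have "Qn_relations n (Uc n c) (rho n c)"
    unfolding Qn_relations_def
    using is_proj_rho[OF assms(2)] sum_rho_Uv sum_rho_Vv[OF assms(2)] rho_orthogonal_nonadjacent
    by simp
  then have "extends_to_unital_star_hom n (Uc n c) (rho n c)"
    unfolding extends_to_unital_star_hom_def using finite_Uc rho_support by simp
  moreover have "is_proj (Uc n c) (rho n c j)" if "j \<in> Vc n c" for j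
    using is_proj_rho[OF assms(2)] that Vc_subset_Vv by blast
  ultimately show ?thesis
    using range_rho_Vc[OF assms(2)] by simp
qed

end
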